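(* Let $\mathbb{G}\subset\mathbb{N}$ be a finite set with $0\in\mathbb{G}$, let $\ell\in\mathbb{N}$, and define the symmetric array $$\mathbb{S}=\mathbb{S}(\mathbb{G},\ell)\triangleq\mathbb{G}\cup(\max\mathbb{G}-\mathbb{G}+\ell).$$ If $\mathbb{G}-\mathbb{G}\supseteq[0:\max\mathbb{G}]$ and $\mathbb{G}+\mathbb{G}\supseteq[0:\ell-1]$, then $\mathbb{S}+\mathbb{S}=[0:2\max\mathbb{S}]$.
   Context: For finite sets $\mathbb{A},\mathbb{B}\subset\mathbb{Z}$ and $c\in\mathbb{Z}$: $\mathbb{A}+\mathbb{B}=\{a+b: a\in\mathbb{A},b\in\mathbb{B}\}$, $\mathbb{A}-\mathbb{B}=\{a-b: a\in\mathbb{A},b\in\mathbb{B}\}$, $c-\mathbb{A}=\{c-a:a\in\mathbb{A}\}$, $\mathbb{A}+c=\{a+c:a\in\mathbb{A}\}$. For $a,b\in\mathbb{R}$, $[a:b]=\{c\in\mathbb{Z}: a\le c\le b\}$ (empty if $b<a$). $\mathbb{N}$ includes $0$. *)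

theory Defs
  imports Main
begin

definition sumset :: "int set \<Rightarrow> int set \<Rightarrow> int set" where
  "sumset A B = {a + b | a b. a \<in> A \<and> b \<in> B}"

definition diffset :: "int set \<Rightarrow> int set \<Rightarrow> int set" where
  "diffset A B = {a - b | a b. a \<in> A \<and> b \<in> B}"

definition symarray :: "int set \<Rightarrow> int \<Rightarrow> int set" where
  "symarray G l = G \<union> {Max G - g + l | g. g \<in> G}"

end

theory Submission
  imports Defs
begin

(* Write c = Max G + l, so that S = G \<union> (c - G).  Then S + S contains
   G + G \<supseteq> [0 : l-1],
   G + (c - G) = c + (G - G) \<supseteq> c + [-Max G : Max G] = [l : 2 Max G + l]   (G - G is symmetric),
   (c - G) + (c - G) = 2c - (G + G) \<supseteq> [2c - l + 1 : 2c],
   and these three intervals cover [0 : 2c], while S \<subseteq> [0 : c] with c \<in> S. *)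

lemma sumset_mono:
  assumes "A \<subseteq> A'" and "B \<subseteq> B'"
  shows "sumset A B \<subseteq> sumset A' B'"
  using assms unfolding sumset_def by blast

lemma sumset_subset_atLeastAtMost:
  assumes "A \<subseteq> {a..b}" and "B \<subseteq> {c..d}"
  shows "sumset A B \<subseteq> {a + c..b + d}"
  using assms unfolding sumset_def by fastforce

lemma sumset_diff_right:
  "sumset A ((-) c ` B) = (+) c ` diffset A B"
proof (intro set_eqI iffI)
  fix x assume "x \<in> sumset A ((-) c ` B)"
  then obtain a b where "a \<in> A" "b \<in> B" "x = c + (a - b)"
    unfolding sumset_def by auto
  then show "x \<in> (+) c ` diffset A B" unfolding diffset_def by blast
next
  fix x assume "x \<in> (+) c ` diffset A B"
  then obtain a b where "a \<in> A" "b \<in> B" "x = a + (c - b)"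
    unfolding diffset_def by auto
  then show "x \<in> sumset A ((-) c ` B)" unfolding sumset_def by blast
qed

lemma sumset_diff_both:
  "sumset ((-) c ` A) ((-) c ` B) = (-) (2 * c) ` sumset A B"
proof (intro set_eqI iffI)
  fix x assume "x \<in> sumset ((-) c ` A) ((-) c ` B)"
  then obtain a b where "a \<in> A" "b \<in> B" "x = 2 * c - (a + b)"
    unfolding sumset_def by auto
  then show "x \<in> (-) (2 * c) ` sumset A B" unfolding sumset_def by blast
next
  fix x assume "x \<in> (-) (2 * c) ` sumset A B"
  then obtain a b where "a \<in> A" "b \<in> B" "x = (c - a) + (c - b)"
    unfolding sumset_def by auto
  then show "x \<in> sumset ((-) c ` A) ((-) c ` B)" unfolding sumset_def by blast
qed

lemma diffset_self_symmetric_interval: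
  assumes "{0..m} \<subseteq> diffset A A"
  shows "{-m..m} \<subseteq> diffset A A"
proof
  fix x :: int assume x: "x \<in> {-m..m}"
  show "x \<in> diffset A A"
  proof (cases "0 \<le> x")
    case True
    then show ?thesis using x assms by auto
  next
    case False
    then have "-x \<in> diffset A A" using x assms by auto
    then show ?thesis unfolding diffset_def by force
  qed
qed

lemma sumset_diff_right_covers_interval:
  assumes "{0..m} \<subseteq> diffset A A"
  shows "{c - m..c + m} \<subseteq> sumset A ((-) c ` A)"
proof -
  have "{c - m..c + m} = (+) c ` {-m..m}" by simp
  also have "\<dots> \<subseteq> sumset A ((-) c ` A)"
    unfolding sumset_diff_right by (rule image_mono[OF diffset_self_symmetric_interval[OF assms]])
  finally show ?thesis .
qed

lemma sumset_diff_both_covers_interval: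
  assumes "{0..k} \<subseteq> sumset A A"
  shows "{2 * c - k..2 * c} \<subseteq> sumset ((-) c ` A) ((-) c ` A)"
proof -
  have "{2 * c - k..2 * c} = (-) (2 * c) ` {0..k}" by simp
  also have "\<dots> \<subseteq> sumset ((-) c ` A) ((-) c ` A)"
    unfolding sumset_diff_both by (rule image_mono[OF assms])
  finally show ?thesis .
qed

lemma symarray_eq:
  "symarray G l = G \<union> (-) (Max G + l) ` G"
  unfolding symarray_def by (auto simp: algebra_simps)

lemma symarray_subset_atLeastAtMost:
  assumes "finite G" and "\<forall>g\<in>G. 0 \<le> g" and "0 \<le> l"
  shows "symarray G l \<subseteq> {0..Max G + l}"
proof -
  have "G \<subseteq> {0..Max G + l}"
  proof
    fix g assume "g \<in> G"
    then show "g \<in> {0..Max G + l}" using Max_ge[OF assms(1)] assms(2,3) by fastforce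
  qed
  then show ?thesis by (auto simp: symarray_eq)
qed

lemma Max_symarray:
  assumes "finite G" and "\<forall>g\<in>G. 0 \<le> g" and "0 \<in> G" and "0 \<le> l"
  shows "Max (symarray G l) = Max G + l"
proof (rule Max_eqI)
  show "finite (symarray G l)" using assms(1) by (simp add: symarray_eq)
  show "Max G + l \<in> symarray G l" using assms(3) by (force simp: symarray_eq)
qed (use symarray_subset_atLeastAtMost[OF assms(1,2,4)] in auto)

theorem theorem1:
  fixes G :: "int set" and l :: nat
  assumes "finite G" and "\<forall>g\<in>G. 0 \<le> g" and "0 \<in> G"
    and "{0..Max G} \<subseteq> diffset G G"
    and "{0..int l - 1} \<subseteq> sumset G G"
  shows "sumset (symarray G (int l)) (symarray G (int l)) = {0..2 * Max (symarray G (int l))}"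
proof -
  define c where "c = Max G + int l"
  define S where "S = symarray G (int l)"
  have S_eq: "S = G \<union> (-) c ` G" by (simp add: S_def c_def symarray_eq)
  have Max_S: "Max S = c" unfolding S_def c_def using assms(1-3) by (simp add: Max_symarray)
  have "S \<subseteq> {0..c}"
    unfolding S_def c_def using assms(1,2) by (simp add: symarray_subset_atLeastAtMost)
  then have "sumset S S \<subseteq> {0..2 * c}"
    using sumset_subset_atLeastAtMost[of S 0 c S 0 c] by simp
  moreover have "{0..int l - 1} \<subseteq> sumset S S"
    using assms(5) sumset_mono[of G S G S] S_eq by blast
  moreover have "{c - Max G..c + Max G} \<subseteq> sumset S S"
    using sumset_diff_right_covers_interval[OF assms(4)] sumset_mono[of G S "(-) c ` G" S] S_eq
    by blast
  moreover have "{2 * c - (int l - 1)..2 * c} \<subseteq> sumset S S"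
    using sumset_diff_both_covers_interval[OF assms(5)] sumset_mono[of "(-) c ` G" S "(-) c ` G" S] S_eq
    by blast
  moreover have "{0..2 * c} \<subseteq> {0..int l - 1} \<union> {c - Max G..c + Max G} \<union> {2 * c - (int l - 1)..2 * c}"
    by (auto simp: c_def)
  ultimately have "sumset S S = {0..2 * c}" by blast
  then show ?thesis using Max_S unfolding S_def by simp
qed

end
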